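(* Let $f=a_0+a_1x+\cdots+a_nx^n\in\mathbb{Z}[x]$ be a primitive polynomial. Suppose that $a_0=\pm p^k d$ and $\gcd(a_0,a_1,a_2)=p^k$ for some positive integers $k$ and $d$ and a prime number $p$, where $p\nmid a_3 d$ and $\gcd(k,3)=1$, and that every zero $\theta\in\mathbb{C}$ of $f$ satisfies $|\theta|>d$. Then $f$ is irreducible in $\mathbb{Z}[x]$.
   Context: A polynomial $a_0+a_1x+\cdots+a_nx^n\in\mathbb{Z}[x]$ is primitive if $\gcd(a_0,a_1,\ldots,a_n)=1$. Coefficients $a_i$ with $i>n$ are taken to be $0$. *)

theory Defs
  imports "HOL-Computational_Algebra.Computational_Algebra"
begin

end

theory Submission
  imports Defs
begin

(* Suppose f = g h with g, h nonconstant, with constant terms b0, c0. Over the complex numbers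
   |b0| is |lead_coeff g| times the product of the moduli of the roots of g, hence |b0| > d,
   and likewise |c0| > d. As b0 c0 = +-p^k d, neither factor can be prime to p, so
   b0 = p^i u and c0 = p^j w with i, j >= 1, i + j = k and p not dividing u w. Modulo p the
   cubic coefficient of f is b1 c2 + b2 c1, so p divides at most one of b1 and c1; say not b1.
   In the linear coefficient b0 c1 + b1 c0, which p^k divides, b1 c0 has valuation exactly j < k,
   so b0 c1 also has valuation j: i <= j and c1 has valuation j - i. In the quadratic
   coefficient b0 c2 + b1 c1 + b2 c0 the term b1 c1 (if j - i < i) or b0 c2 (if j - i > i) has
   strictly smallest valuation, which is below k; hence j - i = i and k = 3 i, contradicting
   gcd k 3 = 1. *)

lemma primitive_mult_degree_0_imp_unit:
  fixes g h :: "'a :: {factorial_ring_gcd, normalization_semidom_multiplicative} poly"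
  assumes "content (g * h) = 1" and "degree g = 0"
  shows "is_unit g"
proof -
  obtain c where c: "g = [:c:]" using assms(2) degree_eq_zeroE by blast
  have "normalize c * content h = 1" using assms(1) by (simp add: content_mult c)
  hence "c dvd 1" by (metis dvd_triv_left normalize_dvd_iff)
  thus ?thesis using c by (simp add: is_unit_const_poly_iff)
qed

lemma irreducible_primitive_polyI:
  fixes f :: "'a :: {factorial_ring_gcd, normalization_semidom_multiplicative} poly"
  assumes "content f = 1" and "degree f \<ge> 1"
    and "\<And>g h. f = g * h \<Longrightarrow> degree g \<ge> 1 \<Longrightarrow> degree h \<ge> 1 \<Longrightarrow> False"
  shows "irreducible f"
proof (rule irreducibleI)
  show "f \<noteq> 0" and "\<not> is_unit f"
    using assms(2) by (auto elim: is_unit_polyE)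
next
  fix g h assume f: "f = g * h"
  show "is_unit g \<or> is_unit h"
  proof (rule ccontr)
    assume "\<not> (is_unit g \<or> is_unit h)"
    hence "degree g \<ge> 1" and "degree h \<ge> 1"
      using primitive_mult_degree_0_imp_unit[of g h] primitive_mult_degree_0_imp_unit[of h g]
        assms(1) f by (auto simp: mult.commute Suc_le_eq)
    thus False using assms(3) f by blast
  qed
qed

lemma map_poly_of_int_mult:
  "map_poly (of_int :: int \<Rightarrow> 'a :: comm_ring_1) (p * q) = map_poly of_int p * map_poly of_int q"
  by (simp add: poly_eq_iff coeff_map_poly coeff_mult)

lemma norm_poly_0_gt_power_degree:
  fixes q :: "complex poly" and D :: real
  assumes "degree q \<ge> 1" and "D \<ge> 0" and roots: "\<And>z. poly q z = 0 \<Longrightarrow> D < cmod z"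
  shows "D ^ degree q * cmod (lead_coeff q) < cmod (poly q 0)"
proof -
  obtain r where q: "smult (lead_coeff q) (\<Prod>i<degree q. [:- r i, 1:]) = q"
    by (rule complex_poly_decompose')
  have "lead_coeff q \<noteq> 0" using assms(1) by auto
  have "poly q (r i) = 0" if "i < degree q" for i
    using that by (subst q [symmetric]) (auto simp: poly_prod)
  hence "D < cmod (r i)" if "i < degree q" for i using roots that by blast
  hence "(\<Prod>i<degree q. D) < (\<Prod>i<degree q. cmod (r i))"
    using assms(1,2) by (intro prod_mono_strict[of 0]) (force intro: less_imp_le le_less_trans)+
  moreover have "poly q 0 = lead_coeff q * (\<Prod>i<degree q. - r i)"
    by (subst q [symmetric]) (simp add: poly_prod)
  ultimately show ?thesis
    using \<open>lead_coeff q \<noteq> 0\<close> by (simp add: norm_mult prod_norm [symmetric] mult.commute)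
qed

lemma abs_coeff_0_gt_of_roots_gt:
  fixes f g :: "int poly" and D :: real
  assumes "g dvd f" and "degree g \<ge> 1" and "D \<ge> 1"
    and roots: "\<forall>z::complex. poly (map_poly of_int f) z = 0 \<longrightarrow> D < cmod z"
  shows "D < \<bar>coeff g 0\<bar>"
proof -
  define G where "G = map_poly (of_int :: int \<Rightarrow> complex) g"
  obtain h where "f = g * h" using assms(1) by blast
  hence "D < cmod z" if "poly G z = 0" for z
    using roots that by (simp add: G_def map_poly_of_int_mult)
  moreover have "degree G = degree g" by (simp add: G_def degree_map_poly)
  ultimately have "D ^ degree g * cmod (lead_coeff G) < cmod (poly G 0)"
    using norm_poly_0_gt_power_degree[of G D] assms(2,3) by simp
  hence "D ^ degree g * \<bar>lead_coeff g\<bar> < \<bar>coeff g 0\<bar>"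
    by (simp add: G_def degree_map_poly coeff_map_poly poly_0_coeff_0)
  moreover have "D \<le> D ^ degree g"
    using assms(2,3) by (metis power_increasing power_one_right)
  moreover have "lead_coeff g \<noteq> 0" using assms(2) by auto
  hence "1 \<le> \<bar>real_of_int (lead_coeff g)\<bar>"
    by (metis of_int_1_le_iff of_int_abs int_one_le_iff_zero_less zero_less_abs_iff)
  ultimately show ?thesis
    using \<open>D \<ge> 1\<close> mult_mono[of D "D ^ degree g" 1 "\<bar>real_of_int (lead_coeff g)\<bar>"] by simp
qed

lemma prime_dvd_of_large_dvd_prime_power_mult:
  fixes p x e :: int
  assumes "prime p" and "x dvd p ^ k * e" and "e \<noteq> 0" and "\<bar>e\<bar> < \<bar>x\<bar>"
  shows "p dvd x"
proof (rule ccontr)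
  assume "\<not> p dvd x"
  hence "coprime x (p ^ k)" using assms(1) by (simp add: coprime_commute prime_imp_coprime)
  hence "x dvd e" using assms(2) by (simp add: coprime_dvd_mult_right_iff)
  thus False using assms(3,4) by (auto dest: dvd_imp_le_int)
qed

lemma power_Suc_dvd_power_mult_iff:
  fixes p x :: "'a :: idom"
  assumes "p \<noteq> 0"
  shows "p ^ Suc e dvd p ^ e * x \<longleftrightarrow> p dvd x"
  using assms by (simp add: power_Suc2)

lemma linear_coeff_exact_power:
  fixes p u w b1 c1 :: int
  assumes p: "prime p" and "i \<ge> 1" and u: "\<not> p dvd u" and "\<not> p dvd w" and "\<not> p dvd b1"
    and lin: "p ^ (i + j) dvd p ^ i * u * c1 + b1 * (p ^ j * w)"
  obtains t where "i \<le> j" and "c1 = p ^ (j - i) * t" and "\<not> p dvd t"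
proof -
  have "p \<noteq> 0" using p by auto
  have "\<not> p ^ Suc j dvd p ^ j * (b1 * w)"
    using assms \<open>p \<noteq> 0\<close> by (simp add: power_Suc_dvd_power_mult_iff prime_dvd_mult_iff)
  moreover have "p ^ Suc j dvd p ^ (i + j)" using \<open>i \<ge> 1\<close> by (intro le_imp_power_dvd) simp
  ultimately have not_Suc_j: "\<not> p ^ Suc j dvd p ^ i * u * c1"
    using lin by (metis dvd_add_right_iff dvd_trans mult.left_commute)
  have "i \<le> j"
  proof (rule ccontr)
    assume "\<not> i \<le> j"
    hence "p ^ Suc j dvd p ^ i" by (intro le_imp_power_dvd) simp
    thus False using not_Suc_j by (metis dvd_mult2)
  qed
  have "p ^ j dvd p ^ i * u * c1"
  proof -
    have "p ^ j dvd p ^ i * u * c1 + b1 * (p ^ j * w)"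
      using lin dvd_trans[OF le_imp_power_dvd[of j "i + j" p]] by simp
    thus ?thesis by (simp add: dvd_add_left_iff)
  qed
  hence "p ^ i * p ^ (j - i) dvd p ^ i * (u * c1)"
    using \<open>i \<le> j\<close> by (simp add: power_add [symmetric] mult.assoc)
  hence "p ^ (j - i) dvd u * c1" using \<open>p \<noteq> 0\<close> by simp
  moreover have "coprime (p ^ (j - i)) u" using p u by (simp add: prime_imp_coprime)
  ultimately obtain t where t: "c1 = p ^ (j - i) * t"
    using coprime_dvd_mult_right_iff by blast
  moreover have "\<not> p dvd t"
  proof
    assume "p dvd t"
    hence "p ^ Suc j dvd p ^ i * p ^ (j - i) * t"
      using \<open>i \<le> j\<close> by (simp add: power_add [symmetric] mult_dvd_mono)
    thus False using not_Suc_j t by (metis dvd_mult2 mult.commute mult.left_commute)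
  qed
  ultimately show ?thesis using \<open>i \<le> j\<close> that by blast
qed

lemma quadratic_coeff_exponent_double:
  fixes p u w b1 b2 c1 c2 :: int
  assumes p: "prime p" and "i \<ge> 1" and "j \<ge> 1"
    and u: "\<not> p dvd u" and w: "\<not> p dvd w" and b1: "\<not> p dvd b1"
    and lin: "p ^ (i + j) dvd p ^ i * u * c1 + b1 * (p ^ j * w)"
    and quad: "p ^ (i + j) dvd p ^ i * u * c2 + b1 * c1 + b2 * (p ^ j * w)"
    and cubic: "\<not> p dvd b1 * c2 + b2 * c1"
  shows "j = 2 * i"
proof -
  have "p \<noteq> 0" using p by auto
  obtain t where "i \<le> j" and c1: "c1 = p ^ (j - i) * t" and t: "\<not> p dvd t"
    using linear_coeff_exact_power[OF p \<open>i \<ge> 1\<close> u w b1 lin] .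
  define m where "m = j - i"
  have j: "j = i + m" using \<open>i \<le> j\<close> by (simp add: m_def)
  have quad_mod: "p ^ Suc e dvd p ^ i * u * c2 + b1 * c1 + b2 * (p ^ j * w)" if "e < i + j" for e
    using quad that by (meson Suc_leI dvd_trans le_imp_power_dvd)
  have "\<not> m < i"
  proof
    assume "m < i"
    have "p ^ Suc m dvd p ^ i * u * c2" using \<open>m < i\<close>
      by (metis Suc_leI dvd_mult2 le_imp_power_dvd)
    moreover have "p ^ Suc m dvd b2 * (p ^ j * w)" using \<open>m < i\<close> j
      by (intro dvd_mult dvd_mult2 le_imp_power_dvd) simp
    moreover have "\<not> p ^ Suc m dvd b1 * c1"
      using b1 t \<open>p \<noteq> 0\<close> p
      by (simp add: c1 m_def mult.left_commute power_Suc_dvd_power_mult_iff prime_dvd_mult_iff)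
    ultimately show False using quad_mod[of m] \<open>m < i\<close>
      by (metis add.commute dvd_add_right_iff trans_less_add2)
  qed
  moreover have "\<not> i < m"
  proof
    assume "i < m"
    hence "p dvd c1" by (simp add: c1 m_def [symmetric])
    hence "\<not> p dvd c2" using cubic b1 by auto
    hence "\<not> p ^ Suc i dvd p ^ i * u * c2"
      using u p \<open>p \<noteq> 0\<close> by (simp add: mult.assoc power_Suc_dvd_power_mult_iff prime_dvd_mult_iff)
    moreover have "p ^ Suc i dvd b1 * c1" using \<open>i < m\<close>
      unfolding c1 m_def [symmetric] by (intro dvd_mult dvd_mult2 le_imp_power_dvd) simp
    moreover have "p ^ Suc i dvd b2 * (p ^ j * w)" using \<open>i < m\<close> j
      by (intro dvd_mult dvd_mult2 le_imp_power_dvd) simp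
    ultimately show False using quad_mod[of i] \<open>j \<ge> 1\<close>
      by (metis dvd_add_left_iff less_add_same_cancel1 less_le_trans zero_less_one)
  qed
  ultimately show ?thesis using j by simp
qed

lemma three_dvd_exponent_of_low_coeffs:
  fixes g h :: "int poly" and p e :: int
  assumes p: "prime p"
    and const: "coeff (g * h) 0 = p ^ k * e" and "\<not> p dvd e"
    and "p dvd coeff g 0" and "p dvd coeff h 0"
    and lin: "p ^ k dvd coeff (g * h) 1" and quad: "p ^ k dvd coeff (g * h) 2"
    and cubic: "\<not> p dvd coeff (g * h) 3"
  shows "3 dvd k"
proof -
  let ?b = "coeff g" and ?c = "coeff h"
  have coeffs: "coeff (g * h) 0 = ?b 0 * ?c 0"
    "coeff (g * h) 1 = ?b 0 * ?c 1 + ?b 1 * ?c 0"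
    "coeff (g * h) 2 = ?b 0 * ?c 2 + ?b 1 * ?c 1 + ?b 2 * ?c 0"
    "coeff (g * h) 3 = ?b 0 * ?c 3 + ?b 1 * ?c 2 + ?b 2 * ?c 1 + ?b 3 * ?c 0"
    by (simp_all add: coeff_mult numeral_2_eq_2 numeral_3_eq_3)
  have "p \<noteq> 0" and "\<not> is_unit p" using p by auto
  have "e \<noteq> 0" using \<open>\<not> p dvd e\<close> by auto
  hence "?b 0 \<noteq> 0" and "?c 0 \<noteq> 0" using const coeffs(1) \<open>p \<noteq> 0\<close> by auto
  then obtain i j u w where b0: "?b 0 = p ^ i * u" and u: "\<not> p dvd u"
    and c0: "?c 0 = p ^ j * w" and w: "\<not> p dvd w"
    using \<open>\<not> is_unit p\<close> by (metis multiplicity_decompose')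
  have "coeff (g * h) 0 = p ^ (i + j) * (u * w)"
    using coeffs(1) b0 c0 by (simp add: power_add ac_simps)
  moreover have "\<not> p dvd u * w" using u w p by (simp add: prime_dvd_mult_iff)
  ultimately have k: "k = i + j"
    using const \<open>\<not> p dvd e\<close> \<open>p \<noteq> 0\<close> by (metis multiplicity_decomposeI)
  have "i \<ge> 1" and "j \<ge> 1"
    using assms(4,5) b0 c0 u w by (auto simp: Suc_le_eq intro: Nat.gr0I)
  have mid: "\<not> p dvd ?b 1 * ?c 2 + ?b 2 * ?c 1"
  proof
    assume "p dvd ?b 1 * ?c 2 + ?b 2 * ?c 1"
    with assms(4,5) have "p dvd ?b 0 * ?c 3 + (?b 1 * ?c 2 + ?b 2 * ?c 1) + ?b 3 * ?c 0" by simp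
    thus False using cubic by (simp add: coeffs(4) add.assoc)
  qed
  have lin': "p ^ (i + j) dvd p ^ i * u * ?c 1 + ?b 1 * (p ^ j * w)"
    and quad': "p ^ (i + j) dvd p ^ i * u * ?c 2 + ?b 1 * ?c 1 + ?b 2 * (p ^ j * w)"
    using lin quad by (simp_all only: coeffs b0 c0 k)
  consider "\<not> p dvd ?b 1" | "\<not> p dvd ?c 1" using mid by (metis dvd_add dvd_mult dvd_mult2)
  hence "j = 2 * i \<or> i = 2 * j"
  proof cases
    case 1
    thus ?thesis using quadratic_coeff_exponent_double[OF p \<open>i \<ge> 1\<close> \<open>j \<ge> 1\<close> u w 1 lin' quad' mid]
      by simp
  next
    case 2
    have "p ^ (j + i) dvd p ^ j * w * ?b 1 + ?c 1 * (p ^ i * u)"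
      and "p ^ (j + i) dvd p ^ j * w * ?b 2 + ?c 1 * ?b 1 + ?c 2 * (p ^ i * u)"
      and "\<not> p dvd ?c 1 * ?b 2 + ?c 2 * ?b 1"
      using lin' quad' mid by (simp_all add: ac_simps)
    thus ?thesis using quadratic_coeff_exponent_double[OF p \<open>j \<ge> 1\<close> \<open>i \<ge> 1\<close> w u 2] by simp
  qed
  thus ?thesis using k by auto
qed

theorem theorem24:
  fixes f :: "int poly" and p k d :: nat
  assumes "content f = 1"
    and "prime p" and "k > 0" and "d > 0"
    and "coeff f 0 = int p ^ k * int d \<or> coeff f 0 = - (int p ^ k * int d)"
    and "gcd (coeff f 0) (gcd (coeff f 1) (coeff f 2)) = int p ^ k"
    and "\<not> int p dvd coeff f 3 * int d"
    and "gcd k 3 = 1"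
    and "\<forall>\<theta>::complex. poly (map_poly of_int f) \<theta> = 0 \<longrightarrow> cmod \<theta> > real d"
  shows "irreducible f"
proof (rule irreducible_primitive_polyI[OF assms(1)])
  obtain e where const: "coeff f 0 = int p ^ k * e" and e: "\<bar>e\<bar> = int d"
    using assms(5) by (metis abs_minus abs_of_nat mult_minus_right)
  have p: "prime (int p)" using assms(2) by simp
  have "\<not> int p dvd int d" and cubic: "\<not> int p dvd coeff f 3"
    using assms(7) by (auto intro: dvd_mult dvd_mult2)
  hence "\<not> int p dvd e" using e by (metis dvd_abs_iff)
  have "int p ^ k dvd gcd (coeff f 1) (coeff f 2)" using assms(6) by (metis gcd_dvd2)
  hence "int p ^ k dvd coeff f 1" and "int p ^ k dvd coeff f 2" by (auto intro: dvd_trans)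
  show "degree f \<ge> 1" using cubic le_degree[of f 3] by fastforce
  fix g h assume f: "f = g * h" and "degree g \<ge> 1" and "degree h \<ge> 1"
  have "real d \<ge> 1" using assms(4) by simp
  have "real d < \<bar>coeff g 0\<bar>" and "real d < \<bar>coeff h 0\<bar>"
    using abs_coeff_0_gt_of_roots_gt[OF _ _ \<open>real d \<ge> 1\<close> assms(9)] f
      \<open>degree g \<ge> 1\<close> \<open>degree h \<ge> 1\<close> by simp_all
  moreover have const_mult: "coeff g 0 * coeff h 0 = int p ^ k * e"
    using const f by (simp add: coeff_mult_0)
  hence "coeff g 0 dvd int p ^ k * e" and "coeff h 0 dvd int p ^ k * e"
    by (simp_all flip: const_mult)
  ultimately have "int p dvd coeff g 0" and "int p dvd coeff h 0"
    using prime_dvd_of_large_dvd_prime_power_mult[OF p] e assms(4) by simp_all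
  hence "3 dvd k"
    using three_dvd_exponent_of_low_coeffs[OF p] const f \<open>\<not> int p dvd e\<close> cubic
      \<open>int p ^ k dvd coeff f 1\<close> \<open>int p ^ k dvd coeff f 2\<close> by blast
  hence "3 dvd gcd k 3" by simp
  thus False using assms(8) by simp
qed

end
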